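(* Let $V, W$ be real Banach spaces and let $h$ be a $C^1$ diffeomorphism of $V$ with $h^k = h \circ \cdots \circ h = \mathrm{id}_V$ ($k$-fold) for some integer $k \ge 1$. Let $f: [0,\infty) \times V \to V$ and $\Delta t > 0$ satisfy $$f(t, h^n(u)) = Dh^n(u)\, f(t + n\Delta t, u) \quad \text{for all } 1 \le n \le k,\ u \in V,\ t \ge 0.$$ Suppose there is $\Theta \in GL(V,W)$ and $\lambda < 0$ with $M^\Theta(f_t) \le \lambda$ for all $t \ge 0$. Then for every solution $u$ of $\dot u = f(t,u)$, the limit $p(t) = \lim_{n\to\infty} u(t + nk\Delta t)$ exists for every $t \ge 0$. The resulting function $p$ is $k\Delta t$-periodic, and $\|u(t) - p(t)\| \to 0$ exponentially as $t \to \infty$.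
   Context: For a real Banach space $X$, the right semi-inner product is $(a,b)_+ := \|a\| \lim_{s \to 0^+} \frac{\|a + sb\| - \|a\|}{s}$. For $\Theta \in GL(V,W)$ (a bijective bounded linear operator) and $g: V \to V$, $M^\Theta(g) := \sup_{u \ne v \in V} \frac{(\Theta(u-v), \Theta(g(u) - g(v)))_+}{\|\Theta(u-v)\|_W^2}$. We write $f_t = f(t,\cdot)$, and $D$ denotes the Fréchet derivative. Solutions are continuously differentiable curves $[0,\infty) \to V$ satisfying the equation for all $t \ge 0$. *)

theory Defs
  imports "HOL-Analysis.Analysis"
begin

definition C1_map :: "('a::real_normed_vector \<Rightarrow> 'b::real_normed_vector) \<Rightarrow> bool" where
  "C1_map g \<longleftrightarrow> (\<exists>g'. (\<forall>x. (g has_derivative blinfun_apply (g' x)) (at x)) \<and> continuous_on UNIV g')"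

definition C1_diffeo :: "('a::real_normed_vector \<Rightarrow> 'a) \<Rightarrow> bool" where
  "C1_diffeo g \<longleftrightarrow> bij g \<and> C1_map g \<and> C1_map (inv g)"

definition sip_plus :: "'a::real_normed_vector \<Rightarrow> 'a \<Rightarrow> real" where
  "sip_plus a b = norm a * Lim (at_right 0) (\<lambda>s. (norm (a + s *\<^sub>R b) - norm a) / s)"

definition GL :: "('a::real_normed_vector \<Rightarrow> 'b::real_normed_vector) \<Rightarrow> bool" where
  "GL \<Theta> \<longleftrightarrow> bounded_linear \<Theta> \<and> bij \<Theta>"

definition M_Theta :: "('a::real_normed_vector \<Rightarrow> 'b::real_normed_vector) \<Rightarrow> ('a \<Rightarrow> 'a) \<Rightarrow> ereal" where
  "M_Theta \<Theta> g = (SUP uv\<in>{(u,v). u \<noteq> v}.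
      ereal (sip_plus (\<Theta> (fst uv - snd uv)) (\<Theta> (g (fst uv) - g (snd uv)))
             / (norm (\<Theta> (fst uv - snd uv)))\<^sup>2))"

definition is_solution :: "(real \<Rightarrow> 'a::real_normed_vector \<Rightarrow> 'a) \<Rightarrow> (real \<Rightarrow> 'a) \<Rightarrow> bool" where
  "is_solution f u \<longleftrightarrow>
     (\<forall>t\<ge>0. (u has_vector_derivative f t (u t)) (at t within {0..}))
     \<and> continuous_on {0..} (\<lambda>t. f t (u t))"

end

theory Submission
  imports Defs
begin

text \<open>Taking n = k in the symmetry hypothesis, h^k = id makes f periodic in t with period
  T = k \<Delta>t, so t \<mapsto> u(t + T) is again a solution. For any two solutions u, v the bound
  M^\<Theta>(f_t) \<le> \<lambda> says that \<phi>(t) = \<parallel>\<Theta>(v(t) - u(t))\<parallel> has upper right Dini derivative at most \<lambda>\<phi>(t),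
  so \<phi> decays like e^{\<lambda>t} by a Gronwall argument. For v(t) = u(t + T), pulled back to V by the
  bounded inverse theorem, this makes the increments u(t + (n+1)T) - u(t + nT) decay
  geometrically in n, so u(t + nT) converges to a T-periodic p(t) with \<parallel>u(t) - p(t)\<parallel> = O(e^{\<lambda>t}).\<close>

lemma geometric_increments_convergent:
  fixes x :: "nat \<Rightarrow> 'a::banach"
  assumes incr: "\<And>n. norm (x (Suc n) - x n) \<le> c * r ^ n" and "0 \<le> r" "r < 1"
  shows "\<exists>l. x \<longlonglongrightarrow> l \<and> norm (l - x 0) \<le> c / (1 - r)"
proof -
  define d where "d n = x (Suc n) - x n" for n
  have geom: "summable (\<lambda>n. c * r ^ n)"
    using assms by (intro summable_mult summable_geometric) simp
  have summable_norm_d: "summable (\<lambda>n. norm (d n))"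
    using incr by (intro summable_comparison_test'[OF geom]) (auto simp: d_def)
  have "(\<lambda>n. x 0 + (\<Sum>i<n. d i)) \<longlonglongrightarrow> x 0 + suminf d"
    by (intro tendsto_add tendsto_const summable_LIMSEQ summable_norm_cancel[OF summable_norm_d])
  moreover have "(\<lambda>n. x 0 + (\<Sum>i<n. d i)) = x"
    by (simp add: d_def sum_lessThan_telescope)
  moreover have "norm (suminf d) \<le> (\<Sum>n. norm (d n))"
    by (rule summable_norm[OF summable_norm_d])
  moreover have "(\<Sum>n. norm (d n)) \<le> (\<Sum>n. c * r ^ n)"
    using incr by (intro suminf_le summable_norm_d geom) (simp add: d_def)
  moreover have "(\<Sum>n. c * r ^ n) = c / (1 - r)"
    using suminf_mult[OF summable_geometric[of r]] suminf_geometric[of r] assms by simp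
  ultimately show ?thesis
    by (intro exI[of _ "x 0 + suminf d"]) auto
qed

section \<open>The bounded inverse theorem\<close>

lemma preimage_bound_of_approximate_preimages:
  fixes T :: "'a::banach \<Rightarrow> 'b::real_normed_vector"
  assumes T: "bounded_linear T" and "M \<ge> 0"
    and approx: "\<And>y. \<exists>x. norm x \<le> M * norm y \<and> norm (y - T x) \<le> norm y / 2"
  shows "\<exists>x. T x = y \<and> norm x \<le> 2 * M * norm y"
proof -
  obtain g where g_bound: "\<And>y. norm (g y) \<le> M * norm y"
    and g_approx: "\<And>y. norm (y - T (g y)) \<le> norm y / 2"
    using approx by metis
  define r where "r n = ((\<lambda>z. z - T (g z)) ^^ n) y" for n
  define x where "x n = (\<Sum>i<n. g (r i))" for n
  have r_Suc: "r (Suc n) = r n - T (g (r n))" for n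
    by (simp add: r_def)
  have T_x: "T (x n) = y - r n" for n
    by (induction n) (simp_all add: x_def r_Suc linear_simps T, simp add: r_def)
  have r_bound: "norm (r n) \<le> norm y * (1/2) ^ n" for n
  proof (induction n)
    case (Suc n)
    have "norm (r (Suc n)) \<le> norm (r n) / 2"
      using g_approx by (simp add: r_Suc)
    also have "\<dots> \<le> norm y * (1/2) ^ n / 2"
      using Suc by (simp add: divide_right_mono)
    finally show ?case
      by simp
  qed (simp add: r_def)
  have "norm (x (Suc n) - x n) \<le> M * norm y * (1/2) ^ n" for n
  proof -
    have "norm (x (Suc n) - x n) \<le> M * norm (r n)"
      using g_bound by (simp add: x_def)
    also have "\<dots> \<le> M * (norm y * (1/2) ^ n)"
      using r_bound \<open>M \<ge> 0\<close> by (intro mult_left_mono) auto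
    finally show ?thesis
      by (simp add: mult.assoc)
  qed
  then obtain l where "x \<longlonglongrightarrow> l" and norm_l: "norm (l - x 0) \<le> M * norm y / (1 - 1/2)"
    using geometric_increments_convergent[of x "M * norm y" "1/2"] by auto
  have "r \<longlonglongrightarrow> 0"
  proof (rule Lim_null_comparison)
    show "\<forall>\<^sub>F n in sequentially. norm (r n) \<le> norm y * (1/2::real) ^ n"
      using r_bound by simp
    show "(\<lambda>n. norm y * (1/2::real) ^ n) \<longlonglongrightarrow> 0"
      using tendsto_mult_right_zero[OF LIMSEQ_power_zero[of "1/2::real"]] by simp
  qed
  then have "(\<lambda>n. T (x n)) \<longlonglongrightarrow> y"
    using tendsto_diff[OF tendsto_const[of y] \<open>r \<longlonglongrightarrow> 0\<close>] by (simp add: T_x)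
  moreover have "(\<lambda>n. T (x n)) \<longlonglongrightarrow> T l"
    using bounded_linear.tendsto[OF T \<open>x \<longlonglongrightarrow> l\<close>] .
  ultimately have "y = T l"
    by (rule LIMSEQ_unique)
  with norm_l show ?thesis
    by (auto simp: x_def)
qed

lemma surj_bounded_linear_closure_image_ball:
  fixes T :: "'a::real_normed_vector \<Rightarrow> 'b::banach"
  assumes "surj T"
  shows "\<exists>n y0 r. r > 0 \<and> ball y0 r \<subseteq> closure (T ` cball 0 (real n))"
proof -
  define G where "G = range (\<lambda>n::nat. closure (T ` cball 0 (real n)))"
  have "\<Union>G = UNIV"
  proof (intro set_eqI iffI)
    fix y :: 'b
    obtain x where "y = T x"
      using assms by (metis surjD)
    moreover have "x \<in> cball 0 (real (nat \<lceil>norm x\<rceil>))"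
      using real_nat_ceiling_ge[of "norm x"] by simp
    ultimately have "y \<in> T ` cball 0 (real (nat \<lceil>norm x\<rceil>))"
      by (simp add: rev_image_eqI)
    then have "y \<in> closure (T ` cball 0 (real (nat \<lceil>norm x\<rceil>)))"
      by (rule closure_subset[THEN subsetD])
    then show "y \<in> \<Union>G"
      unfolding G_def by blast
  qed simp
  have "\<exists>n. interior (closure (T ` cball 0 (real n))) \<noteq> {}"
  proof (rule ccontr)
    assume no_interior: "\<nexists>n. interior (closure (T ` cball 0 (real n))) \<noteq> {}"
    have "euclidean interior_of \<Union>G = {}"
    proof (rule Baire_category_alt)
      show "countable G"
        unfolding G_def by simp
      show "closedin euclidean S \<and> euclidean interior_of S = {}" if "S \<in> G" for S
        using that no_interior by (auto simp: G_def simp flip: closed_closedin)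
    qed (use completely_metrizable_space_euclidean in blast)
    then show False
      using \<open>\<Union>G = UNIV\<close> by simp
  qed
  then obtain n y0 where "y0 \<in> interior (closure (T ` cball 0 (real n)))"
    by blast
  then show ?thesis
    by (auto simp: mem_interior)
qed

text \<open>Both y0 and y0 + c y are r/8-close to images of points of the \<rho>-ball; the rescaled
  difference of these points solves T x = y up to an error of norm y / 2.\<close>

lemma approximate_preimage_of_closure_image_ball:
  fixes T :: "'a::real_normed_vector \<Rightarrow> 'b::real_normed_vector"
  assumes T: "bounded_linear T" and "r > 0"
    and ball: "ball y0 r \<subseteq> closure (T ` cball 0 \<rho>)"
  shows "\<exists>x. norm x \<le> 4 * \<rho> / r * norm y \<and> norm (y - T x) \<le> norm y / 2"
proof (cases "y = 0")
  case True
  then show ?thesis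
    using T by (intro exI[of _ 0]) (simp add: linear_simps)
next
  case False
  define c where "c = r / (2 * norm y)"
  have "c > 0"
    using \<open>r > 0\<close> False by (simp add: c_def)
  have "norm (c *\<^sub>R y) < r"
    using \<open>r > 0\<close> False by (simp add: c_def)
  then have "y0 + c *\<^sub>R y \<in> closure (T ` cball 0 \<rho>)" "y0 \<in> closure (T ` cball 0 \<rho>)"
    using \<open>r > 0\<close> by (auto intro!: subsetD[OF ball] simp: dist_norm)
  moreover have "r / 8 > 0"
    using \<open>r > 0\<close> by simp
  ultimately obtain a b where ab: "a \<in> cball 0 \<rho>" "b \<in> cball 0 \<rho>"
    and near: "dist (T a) (y0 + c *\<^sub>R y) < r/8" "dist (T b) y0 < r/8"
    unfolding closure_approachable by blast
  define x where "x = (1/c) *\<^sub>R (a - b)"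
  have "norm x = norm (a - b) / c"
    using \<open>c > 0\<close> by (simp add: x_def)
  also have "\<dots> \<le> 2 * \<rho> / c"
    using ab norm_triangle_ineq4[of a b] \<open>c > 0\<close> by (intro divide_right_mono) auto
  also have "\<dots> = 4 * \<rho> / r * norm y"
    using \<open>r > 0\<close> False by (simp add: c_def field_simps)
  finally have "norm x \<le> 4 * \<rho> / r * norm y" .
  have "c *\<^sub>R y - (T a - T b) = - ((T a - (y0 + c *\<^sub>R y)) - (T b - y0))"
    by (simp add: algebra_simps)
  then have "norm (c *\<^sub>R y - (T a - T b)) \<le> dist (T a) (y0 + c *\<^sub>R y) + dist (T b) y0"
    by (metis dist_norm norm_minus_cancel norm_triangle_ineq4)
  then have "norm (c *\<^sub>R y - (T a - T b)) < r / 4"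
    using near by linarith
  have "y - T x = (1/c) *\<^sub>R (c *\<^sub>R y - (T a - T b))"
    using T \<open>c > 0\<close> by (simp add: x_def linear_simps algebra_simps)
  then have "norm (y - T x) = norm (c *\<^sub>R y - (T a - T b)) / c"
    using \<open>c > 0\<close> by simp
  also have "\<dots> \<le> (r/4) / c"
    using \<open>norm (c *\<^sub>R y - (T a - T b)) < r / 4\<close> \<open>c > 0\<close> by (intro divide_right_mono) auto
  also have "\<dots> = norm y / 2"
    using \<open>r > 0\<close> False by (simp add: c_def field_simps)
  finally show ?thesis
    using \<open>norm x \<le> 4 * \<rho> / r * norm y\<close> by blast
qed

lemma surj_bounded_linear_approximate_preimages:
  fixes T :: "'a::real_normed_vector \<Rightarrow> 'b::banach"
  assumes T: "bounded_linear T" and "surj T"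
  shows "\<exists>M\<ge>0. \<forall>y. \<exists>x. norm x \<le> M * norm y \<and> norm (y - T x) \<le> norm y / 2"
proof -
  obtain n y0 r where "r > 0" and "ball y0 r \<subseteq> closure (T ` cball 0 (real n))"
    using surj_bounded_linear_closure_image_ball[OF \<open>surj T\<close>] by blast
  moreover have "closure (T ` cball 0 (real n)) \<subseteq> closure (T ` cball 0 (real n + 1))"
    by (intro closure_mono image_mono) auto
  ultimately have "\<exists>x. norm x \<le> 4 * (real n + 1) / r * norm y \<and> norm (y - T x) \<le> norm y / 2" for y
    by (intro approximate_preimage_of_closure_image_ball[OF T \<open>r > 0\<close>]) blast
  then show ?thesis
    using \<open>r > 0\<close> by (intro exI[of _ "4 * (real n + 1) / r"]) auto
qed

lemma bij_bounded_linear_inverse_bound: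
  fixes T :: "'a::banach \<Rightarrow> 'b::banach"
  assumes T: "bounded_linear T" and "bij T"
  shows "\<exists>B\<ge>0. \<forall>x. norm x \<le> B * norm (T x)"
proof -
  obtain M where "M \<ge> 0" and approx: "\<forall>y. \<exists>x. norm x \<le> M * norm y \<and> norm (y - T x) \<le> norm y / 2"
    using surj_bounded_linear_approximate_preimages[OF T] \<open>bij T\<close> by (auto simp: bij_def)
  have "norm x \<le> 2 * M * norm (T x)" for x
  proof -
    obtain x' where "T x' = T x" "norm x' \<le> 2 * M * norm (T x)"
      using preimage_bound_of_approximate_preimages[OF T \<open>M \<ge> 0\<close>] approx by blast
    then show ?thesis
      using \<open>bij T\<close> by (metis bij_def injD)
  qed
  then show ?thesis
    using \<open>M \<ge> 0\<close> by (intro exI[of _ "2 * M"]) auto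
qed

section \<open>The right semi-inner product\<close>

lemma norm_difference_quotient_mono:
  fixes a b :: "'a::real_normed_vector"
  assumes "0 < s" "s \<le> t"
  shows "(norm (a + s *\<^sub>R b) - norm a) / s \<le> (norm (a + t *\<^sub>R b) - norm a) / t"
proof -
  have "a + s *\<^sub>R b = (1 - s/t) *\<^sub>R a + (s/t) *\<^sub>R (a + t *\<^sub>R b)"
    using assms by (simp add: algebra_simps)
  then have "norm (a + s *\<^sub>R b) \<le> norm ((1 - s/t) *\<^sub>R a) + norm ((s/t) *\<^sub>R (a + t *\<^sub>R b))"
    by (metis norm_triangle_ineq)
  also have "\<dots> = (1 - s/t) * norm a + (s/t) * norm (a + t *\<^sub>R b)"
    using assms by simp
  finally have "norm (a + s *\<^sub>R b) - norm a \<le> (s/t) * (norm (a + t *\<^sub>R b) - norm a)"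
    by (simp add: algebra_simps)
  then show ?thesis
    using assms by (simp add: field_simps)
qed

lemma norm_difference_quotient_ge:
  fixes a b :: "'a::real_normed_vector"
  assumes "0 < s"
  shows "- norm b \<le> (norm (a + s *\<^sub>R b) - norm a) / s"
proof -
  have "norm a \<le> norm (a + s *\<^sub>R b) + s * norm b"
    using norm_triangle_ineq4[of "a + s *\<^sub>R b" "s *\<^sub>R b"] assms by simp
  then show ?thesis
    using assms by (simp add: field_simps)
qed

text \<open>By convexity of the norm the difference quotient is monotone in s, so the limit in the
  definition of sip_plus exists; otherwise Lim would return an arbitrary value.\<close>

lemma norm_difference_quotient_tendsto_Inf:
  fixes a b :: "'a::real_normed_vector"
  defines "q \<equiv> \<lambda>s. (norm (a + s *\<^sub>R b) - norm a) / s"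
  shows "(q \<longlongrightarrow> Inf (q ` {0<..})) (at_right 0)"
proof (rule tendstoI)
  fix e :: real
  assume "e > 0"
  have bdd: "bdd_below (q ` {0<..})"
    unfolding bdd_below_def q_def using norm_difference_quotient_ge by blast
  obtain s0 where "s0 > 0" "q s0 < Inf (q ` {0<..}) + e"
    using cInf_lessD[of "q ` {0<..}" "Inf (q ` {0<..}) + e"] \<open>e > 0\<close> by auto
  moreover have "Inf (q ` {0<..}) \<le> q s" "q s \<le> q s0" if "s \<in> {0<..<s0}" for s
    using that bdd norm_difference_quotient_mono[of s s0]
    by (auto intro: cInf_lower simp: q_def)
  ultimately have "dist (q s) (Inf (q ` {0<..})) < e" if "s \<in> {0<..<s0}" for s
    using that by (force simp: dist_real_def)
  then show "\<forall>\<^sub>F s in at_right 0. dist (q s) (Inf (q ` {0<..})) < e"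
    using eventually_at_right_real[OF \<open>s0 > 0\<close>] by (rule eventually_mono[rotated])
qed

lemma sip_plus_le_imp_eventually_norm_le:
  fixes a b :: "'a::real_normed_vector"
  assumes "sip_plus a b \<le> c * norm a" and "a \<noteq> 0" and "e > 0"
  shows "\<forall>\<^sub>F s in at_right 0. norm (a + s *\<^sub>R b) \<le> norm a + s * (c + e)"
proof -
  define q where "q s = (norm (a + s *\<^sub>R b) - norm a) / s" for s
  have lim: "(q \<longlongrightarrow> Inf (q ` {0<..})) (at_right 0)"
    unfolding q_def by (rule norm_difference_quotient_tendsto_Inf)
  then have "sip_plus a b = norm a * Inf (q ` {0<..})"
    unfolding sip_plus_def q_def[symmetric] by (simp add: tendsto_Lim)
  then have "Inf (q ` {0<..}) < c + e"
    using assms by simp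
  then have "\<forall>\<^sub>F s in at_right 0. q s < c + e"
    using lim by (rule order_tendstoD(2)[rotated])
  then show ?thesis
    using eventually_at_right_less[of 0]
    by eventually_elim (simp add: q_def field_simps)
qed

lemma M_Theta_le_imp_sip_plus_le:
  fixes \<Theta> :: "'v::real_normed_vector \<Rightarrow> 'w::real_normed_vector"
  assumes "M_Theta \<Theta> g \<le> ereal lam" and "linear \<Theta>" and "inj \<Theta>" and "x \<noteq> y"
  shows "sip_plus (\<Theta> (x - y)) (\<Theta> (g x - g y)) \<le> lam * norm (\<Theta> (x - y)) * norm (\<Theta> (x - y))"
proof -
  have "\<Theta> (x - y) \<noteq> 0"
    using assms(2-4) by (simp add: linear_diff inj_eq)
  have "ereal (sip_plus (\<Theta> (x - y)) (\<Theta> (g x - g y)) / (norm (\<Theta> (x - y)))\<^sup>2) \<le> M_Theta \<Theta> g"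
    unfolding M_Theta_def by (rule SUP_upper2[of "(x, y)"]) (use \<open>x \<noteq> y\<close> in auto)
  then have "sip_plus (\<Theta> (x - y)) (\<Theta> (g x - g y)) / (norm (\<Theta> (x - y)))\<^sup>2 \<le> lam"
    using assms(1) by (meson ereal_less_eq(3) order_trans)
  then show ?thesis
    using \<open>\<Theta> (x - y) \<noteq> 0\<close> by (simp add: power2_eq_square field_simps)
qed

section \<open>Upper right Dini derivatives\<close>

text \<open>upper_right_dini_le \<phi> t c states D^+ \<phi>(t) \<le> c for the upper right Dini derivative
  D^+ \<phi>(t) = limsup (\<phi>(t + s) - \<phi>(t)) / s as s \<rightarrow> 0+.\<close>

definition upper_right_dini_le :: "(real \<Rightarrow> real) \<Rightarrow> real \<Rightarrow> real \<Rightarrow> bool" where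
  "upper_right_dini_le \<phi> t c \<longleftrightarrow> (\<forall>e>0. \<forall>\<^sub>F s in at_right 0. \<phi> (t + s) \<le> \<phi> t + s * (c + e))"

lemma upper_right_dini_le_0_imp_decreasing:
  fixes \<psi> :: "real \<Rightarrow> real"
  assumes cont: "continuous_on {a..b} \<psi>"
    and dini: "\<And>t. t \<in> {a..<b} \<Longrightarrow> upper_right_dini_le \<psi> t 0"
    and "a \<le> b"
  shows "\<psi> b \<le> \<psi> a"
proof -
  have linear_growth: "\<psi> b \<le> \<psi> a + e * (b - a)" if "e > 0" for e
  proof -
    define S where "S = {t \<in> {a..b}. \<psi> t \<le> \<psi> a + e * (t - a)}"
    have "closed S"
      unfolding S_def by (intro continuous_on_closed_Collect_le cont continuous_intros closed_atLeastAtMost)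
    have "a \<in> S"
      using \<open>a \<le> b\<close> by (simp add: S_def)
    have "bdd_above S"
      by (auto simp: S_def bdd_above_def)
    have "Sup S \<in> S"
      using \<open>a \<in> S\<close> by (intro closed_contains_Sup \<open>bdd_above S\<close> \<open>closed S\<close>) blast
    have "Sup S = b"
    proof (rule ccontr)
      assume "Sup S \<noteq> b"
      with \<open>Sup S \<in> S\<close> have "Sup S \<in> {a..<b}"
        by (auto simp: S_def)
      then have "\<forall>\<^sub>F s in at_right 0. \<psi> (Sup S + s) \<le> \<psi> (Sup S) + s * e \<and> s \<in> {0<..<b - Sup S}"
        using dini[of "Sup S"] \<open>e > 0\<close> eventually_at_right_real[of 0 "b - Sup S"]
        by (auto simp: upper_right_dini_le_def intro: eventually_conj)
      then obtain s where s: "\<psi> (Sup S + s) \<le> \<psi> (Sup S) + s * e" "s \<in> {0<..<b - Sup S}"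
        using eventually_happens'[of "at_right (0::real)"] by auto
      then have "Sup S + s \<in> S"
        using \<open>Sup S \<in> S\<close> by (auto simp: S_def algebra_simps)
      then show False
        using cSup_upper[OF _ \<open>bdd_above S\<close>, of "Sup S + s"] s(2) by simp
    qed
    with \<open>Sup S \<in> S\<close> show ?thesis
      by (simp add: S_def)
  qed
  show ?thesis
  proof (rule ccontr)
    assume "\<not> \<psi> b \<le> \<psi> a"
    with \<open>a \<le> b\<close> have "a < b"
      by (cases "a = b") auto
    define e where "e = (\<psi> b - \<psi> a) / (2 * (b - a))"
    have "e > 0"
      using \<open>a < b\<close> \<open>\<not> \<psi> b \<le> \<psi> a\<close> by (simp add: e_def)
    moreover have "e * (b - a) = (\<psi> b - \<psi> a) / 2"
      using \<open>a < b\<close> by (simp add: e_def field_simps)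
    ultimately show False
      using linear_growth[of e] \<open>\<not> \<psi> b \<le> \<psi> a\<close> by simp
  qed
qed

lemma exp_weighted_increment_le:
  fixes lam t s p q c :: real
  assumes s: "s \<in> {0<..<1}" and "p \<ge> 0" and "c \<ge> 0" and q: "q \<le> p + s * (lam * p + c)"
  shows "exp (- lam * (t + s)) * q \<le> exp (- lam * t) * p + s * (c * (exp (- lam * t) * exp \<bar>lam\<bar>))"
proof -
  have exp_split: "exp (- lam * (t + s)) = exp (- lam * t) * exp (- lam * s)"
    by (simp add: algebra_simps flip: exp_add)
  have "exp (- lam * s) * (1 + lam * s) \<le> exp (- lam * s) * exp (lam * s)"
    by (intro mult_left_mono) auto
  also have "\<dots> = 1"
    by (simp flip: exp_add)
  finally have "exp (- lam * t) * (exp (- lam * s) * (1 + lam * s)) \<le> exp (- lam * t)"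
    by (intro mult_left_le) auto
  then have linear_part: "exp (- lam * (t + s)) * (1 + lam * s) \<le> exp (- lam * t)"
    unfolding exp_split by (simp only: mult.assoc)
  have "- lam * s \<le> \<bar>lam\<bar> * s"
    using s by (intro mult_right_mono) auto
  also have "\<dots> \<le> \<bar>lam\<bar>"
    using s by (intro mult_left_le) auto
  finally have "exp (- lam * s) \<le> exp \<bar>lam\<bar>"
    by simp
  then have error_part: "exp (- lam * (t + s)) \<le> exp (- lam * t) * exp \<bar>lam\<bar>"
    unfolding exp_split by simp
  have "exp (- lam * (t + s)) * q \<le> exp (- lam * (t + s)) * (p + s * (lam * p + c))"
    by (intro mult_left_mono q) auto
  also have "\<dots> = (exp (- lam * (t + s)) * (1 + lam * s)) * p + exp (- lam * (t + s)) * (s * c)"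
    by (simp add: algebra_simps)
  also have "\<dots> \<le> exp (- lam * t) * p + (exp (- lam * t) * exp \<bar>lam\<bar>) * (s * c)"
    using linear_part error_part \<open>p \<ge> 0\<close> \<open>c \<ge> 0\<close> s by (intro add_mono mult_right_mono) auto
  finally show ?thesis
    by (simp add: mult_ac)
qed

lemma upper_right_dini_le_exp_mult:
  fixes \<phi> :: "real \<Rightarrow> real"
  assumes dini: "upper_right_dini_le \<phi> t (lam * \<phi> t)" and "\<phi> t \<ge> 0"
  shows "upper_right_dini_le (\<lambda>t. exp (- lam * t) * \<phi> t) t 0"
  unfolding upper_right_dini_le_def
proof (intro allI impI)
  fix e :: real
  assume "e > 0"
  define E where "E = exp (- lam * t) * exp \<bar>lam\<bar>"
  have "E > 0"
    by (simp add: E_def)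
  have "\<forall>\<^sub>F s in at_right 0. \<phi> (t + s) \<le> \<phi> t + s * (lam * \<phi> t + e / E)"
    using dini \<open>e > 0\<close> \<open>E > 0\<close> by (simp add: upper_right_dini_le_def)
  with eventually_at_right_real[OF zero_less_one]
  show "\<forall>\<^sub>F s in at_right 0. exp (- lam * (t + s)) * \<phi> (t + s) \<le> exp (- lam * t) * \<phi> t + s * (0 + e)"
  proof eventually_elim
    case (elim s)
    then have "exp (- lam * (t + s)) * \<phi> (t + s) \<le> exp (- lam * t) * \<phi> t + s * (e / E * E)"
      unfolding E_def using \<open>\<phi> t \<ge> 0\<close> \<open>e > 0\<close> by (intro exp_weighted_increment_le) auto
    with \<open>E > 0\<close> show ?case
      by simp
  qed
qed

lemma upper_right_dini_gronwall:
  fixes \<phi> :: "real \<Rightarrow> real"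
  assumes cont: "continuous_on {0..} \<phi>" and nonneg: "\<And>t. t \<ge> 0 \<Longrightarrow> \<phi> t \<ge> 0"
    and dini: "\<And>t. t \<ge> 0 \<Longrightarrow> upper_right_dini_le \<phi> t (lam * \<phi> t)"
    and "T \<ge> 0"
  shows "\<phi> T \<le> exp (lam * T) * \<phi> 0"
proof -
  have "continuous_on {0..T} (\<lambda>t. exp (- lam * t) * \<phi> t)"
    by (intro continuous_on_mult continuous_on_subset[OF cont] continuous_intros) auto
  moreover have "upper_right_dini_le (\<lambda>t. exp (- lam * t) * \<phi> t) t 0" if "t \<in> {0..<T}" for t
    using that by (intro upper_right_dini_le_exp_mult dini nonneg) auto
  ultimately have "exp (- lam * T) * \<phi> T \<le> exp (- lam * 0) * \<phi> 0"
    using \<open>T \<ge> 0\<close> by (rule upper_right_dini_le_0_imp_decreasing)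
  then have "exp (lam * T) * (exp (- lam * T) * \<phi> T) \<le> exp (lam * T) * \<phi> 0"
    by simp
  then show ?thesis
    by (simp add: mult.assoc[symmetric] flip: exp_add)
qed

lemma has_vector_derivative_at_right_remainder:
  fixes u :: "real \<Rightarrow> 'a::real_normed_vector"
  assumes "(u has_vector_derivative D) (at t within {a..})" and "a \<le> t" and "e > 0"
  shows "\<forall>\<^sub>F s in at_right 0. norm (u (t + s) - u t - s *\<^sub>R D) \<le> e * s"
proof -
  obtain d where "d > 0"
    and d: "\<forall>y\<in>{a..}. norm (y - t) < d \<longrightarrow> norm (u y - u t - (y - t) *\<^sub>R D) \<le> e * norm (y - t)"
    using assms(1,3) unfolding has_vector_derivative_def has_derivative_within_alt by blast
  show ?thesis
    using eventually_at_right_real[OF \<open>d > 0\<close>]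
  proof eventually_elim
    case (elim s)
    then have "t + s \<in> {a..}" "norm ((t + s) - t) < d"
      using \<open>a \<le> t\<close> by auto
    with d elim show ?case
      by fastforce
  qed
qed

lemma upper_right_dini_le_norm_of_sip_plus:
  fixes x :: "real \<Rightarrow> 'a::real_normed_vector"
  assumes x': "(x has_vector_derivative D) (at t within {a..})" and "a \<le> t"
    and "x t \<noteq> 0" and sip: "sip_plus (x t) D \<le> c * norm (x t)"
  shows "upper_right_dini_le (\<lambda>t. norm (x t)) t c"
  unfolding upper_right_dini_le_def
proof (intro allI impI)
  fix e :: real
  assume "e > 0"
  then have "\<forall>\<^sub>F s in at_right 0. norm (x t + s *\<^sub>R D) \<le> norm (x t) + s * (c + e / 2)"
    using sip \<open>x t \<noteq> 0\<close> by (intro sip_plus_le_imp_eventually_norm_le) auto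
  moreover have "\<forall>\<^sub>F s in at_right 0. norm (x (t + s) - x t - s *\<^sub>R D) \<le> e / 2 * s"
    using \<open>e > 0\<close> by (intro has_vector_derivative_at_right_remainder[OF x' \<open>a \<le> t\<close>]) auto
  ultimately show "\<forall>\<^sub>F s in at_right 0. norm (x (t + s)) \<le> norm (x t) + s * (c + e)"
  proof eventually_elim
    case (elim s)
    have "norm (x (t + s)) \<le> norm (x t + s *\<^sub>R D) + norm (x (t + s) - x t - s *\<^sub>R D)"
      using norm_triangle_ineq[of "x t + s *\<^sub>R D" "x (t + s) - x t - s *\<^sub>R D"] by simp
    with elim show ?case
      by (simp add: algebra_simps)
  qed
qed

lemma M_Theta_upper_right_dini_norm_diff:
  fixes \<Theta> :: "'v::real_normed_vector \<Rightarrow> 'w::real_normed_vector"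
  assumes \<Theta>: "bounded_linear \<Theta>" "inj \<Theta>" and M: "M_Theta \<Theta> g \<le> ereal lam"
    and w': "(w has_vector_derivative g (w t)) (at t within {a..})"
    and u': "(u has_vector_derivative g (u t)) (at t within {a..})"
    and "a \<le> t"
  shows "upper_right_dini_le (\<lambda>t. norm (\<Theta> (w t - u t))) t (lam * norm (\<Theta> (w t - u t)))"
proof -
  have x': "((\<lambda>t. \<Theta> (w t - u t)) has_vector_derivative \<Theta> (g (w t) - g (u t))) (at t within {a..})"
    by (intro bounded_linear.has_vector_derivative[OF \<Theta>(1)] has_vector_derivative_diff w' u')
  show ?thesis
  proof (cases "w t = u t")
    case True
    show ?thesis
      unfolding upper_right_dini_le_def
    proof (intro allI impI)
      fix e :: real
      assume "e > 0"
      from has_vector_derivative_at_right_remainder[OF x' \<open>a \<le> t\<close> this] eventually_at_right_less[of 0]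
      show "\<forall>\<^sub>F s in at_right 0. norm (\<Theta> (w (t + s) - u (t + s)))
          \<le> norm (\<Theta> (w t - u t)) + s * (lam * norm (\<Theta> (w t - u t)) + e)"
        by eventually_elim (use True \<Theta>(1) in \<open>simp add: linear_simps mult.commute\<close>)
    qed
  next
    case False
    then show ?thesis
      using M_Theta_le_imp_sip_plus_le[OF M bounded_linear.linear[OF \<Theta>(1)] \<Theta>(2) False] \<Theta>(1)
      by (intro upper_right_dini_le_norm_of_sip_plus[OF x' \<open>a \<le> t\<close>])
        (simp_all add: linear_simps inj_eq[OF \<Theta>(2)])
  qed
qed

lemma is_solution_continuous_on: "is_solution f u \<Longrightarrow> continuous_on {0..} u"
  unfolding is_solution_def continuous_on_eq_continuous_within
  by (metis atLeast_iff has_vector_derivative_continuous)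

lemma is_solution_dist_le_exp:
  fixes \<Theta> :: "'v::real_normed_vector \<Rightarrow> 'w::real_normed_vector"
  assumes u: "is_solution f u" and v: "is_solution f v"
    and \<Theta>: "bounded_linear \<Theta>" "inj \<Theta>"
    and M: "\<And>t. t \<ge> 0 \<Longrightarrow> M_Theta \<Theta> (f t) \<le> ereal lam"
    and "t \<ge> 0"
  shows "norm (\<Theta> (u t - v t)) \<le> exp (lam * t) * norm (\<Theta> (u 0 - v 0))"
proof (rule upper_right_dini_gronwall[OF _ _ _ \<open>t \<ge> 0\<close>, where \<phi> = "\<lambda>t. norm (\<Theta> (u t - v t))"])
  show "continuous_on {0..} (\<lambda>t. norm (\<Theta> (u t - v t)))"
    using is_solution_continuous_on[OF u] is_solution_continuous_on[OF v]
    by (intro continuous_intros continuous_on_compose2[OF linear_continuous_on[OF \<Theta>(1)]]) auto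
  show "upper_right_dini_le (\<lambda>t. norm (\<Theta> (u t - v t))) s (lam * norm (\<Theta> (u s - v s)))"
    if "s \<ge> 0" for s
    using u v that by (intro M_Theta_upper_right_dini_norm_diff[OF \<Theta> M]) (auto simp: is_solution_def)
qed simp

lemma is_solution_shift:
  assumes u: "is_solution f u" and "T \<ge> 0" and periodic: "\<And>t x. t \<ge> 0 \<Longrightarrow> f (t + T) x = f t x"
  shows "is_solution f (\<lambda>t. u (t + T))"
  unfolding is_solution_def
proof safe
  fix t :: real
  assume "t \<ge> 0"
  have "(u has_vector_derivative f (t + T) (u (t + T))) (at (t + T) within {0..})"
    using u \<open>t \<ge> 0\<close> \<open>T \<ge> 0\<close> by (simp add: is_solution_def)
  then have "(u has_vector_derivative f (t + T) (u (t + T))) (at (t + T) within (\<lambda>t. t + T) ` {0..})"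
    by (rule has_vector_derivative_within_subset) (use \<open>T \<ge> 0\<close> in auto)
  then have "((u \<circ> (\<lambda>t. t + T)) has_vector_derivative 1 *\<^sub>R f (t + T) (u (t + T))) (at t within {0..})"
    by (intro vector_diff_chain_within derivative_eq_intros) auto
  then show "((\<lambda>t. u (t + T)) has_vector_derivative f t (u (t + T))) (at t within {0..})"
    using periodic[OF \<open>t \<ge> 0\<close>] by (simp add: o_def)
next
  have "continuous_on {0..} (\<lambda>t. f (t + T) (u (t + T)))"
    using u \<open>T \<ge> 0\<close> unfolding is_solution_def
    by (intro continuous_on_compose2[where f = "\<lambda>t. t + T" and g = "\<lambda>s. f s (u s)"]) (auto intro!: continuous_intros)
  moreover have "continuous_on {0..} (\<lambda>t. f (t + T) (u (t + T))) \<longleftrightarrow> continuous_on {0..} (\<lambda>t. f t (u (t + T)))"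
    using periodic by (intro continuous_on_cong) auto
  ultimately show "continuous_on {0..} (\<lambda>t. f t (u (t + T)))"
    by simp
qed

lemma asymptotically_periodic_of_exp_decaying_increments:
  fixes u :: "real \<Rightarrow> 'a::banach"
  assumes "T > 0" and "lam < 0"
    and incr: "\<And>t. t \<ge> 0 \<Longrightarrow> norm (u (t + T) - u t) \<le> C * exp (lam * t)"
  shows "\<exists>p. (\<forall>t\<ge>0. (\<lambda>n. u (t + real n * T)) \<longlonglongrightarrow> p t)
    \<and> (\<forall>t\<ge>0. p (t + T) = p t)
    \<and> (\<forall>t\<ge>0. norm (u t - p t) \<le> C / (1 - exp (lam * T)) * exp (lam * t))"
proof -
  have "exp (lam * T) < 1"
    using assms by (simp add: mult_neg_pos)
  have "\<exists>l. (\<lambda>n. u (t + real n * T)) \<longlonglongrightarrow> l \<and> norm (l - u t) \<le> C / (1 - exp (lam * T)) * exp (lam * t)"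
    if "t \<ge> 0" for t
  proof -
    have "norm (u (t + real (Suc n) * T) - u (t + real n * T)) \<le> C * exp (lam * t) * exp (lam * T) ^ n" for n
      using incr[of "t + real n * T"] \<open>t \<ge> 0\<close> \<open>T > 0\<close>
      by (simp add: algebra_simps exp_add flip: exp_of_nat_mult)
    from geometric_increments_convergent[OF this _ \<open>exp (lam * T) < 1\<close>] show ?thesis
      by simp
  qed
  then obtain p where p: "\<And>t. t \<ge> 0 \<Longrightarrow> (\<lambda>n. u (t + real n * T)) \<longlonglongrightarrow> p t
      \<and> norm (p t - u t) \<le> C / (1 - exp (lam * T)) * exp (lam * t)"
    by metis
  have "p (t + T) = p t" if "t \<ge> 0" for t
  proof (rule LIMSEQ_unique)
    show "(\<lambda>n. u (t + T + real n * T)) \<longlonglongrightarrow> p (t + T)"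
      using p[of "t + T"] that \<open>T > 0\<close> by simp
    have "(\<lambda>n. u (t + real (Suc n) * T)) \<longlonglongrightarrow> p t"
      using LIMSEQ_Suc[of "\<lambda>n. u (t + real n * T)"] p[OF that] by blast
    then show "(\<lambda>n. u (t + T + real n * T)) \<longlonglongrightarrow> p t"
      by (simp add: algebra_simps)
  qed
  with p show ?thesis
    by (intro exI[of _ p]) (auto simp: norm_minus_commute)
qed

lemma is_solution_periodic_increments_le_exp:
  fixes \<Theta> :: "'v::banach \<Rightarrow> 'w::banach"
  assumes u: "is_solution f u" and "T \<ge> 0" and periodic: "\<And>t x. t \<ge> 0 \<Longrightarrow> f (t + T) x = f t x"
    and "GL \<Theta>" and M: "\<And>t. t \<ge> 0 \<Longrightarrow> M_Theta \<Theta> (f t) \<le> ereal lam"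
  shows "\<exists>C. \<forall>t\<ge>0. norm (u (t + T) - u t) \<le> C * exp (lam * t)"
proof -
  have \<Theta>: "bounded_linear \<Theta>" "bij \<Theta>"
    using \<open>GL \<Theta>\<close> by (auto simp: GL_def)
  obtain B where "B \<ge> 0" and B: "\<And>x. norm x \<le> B * norm (\<Theta> x)"
    using bij_bounded_linear_inverse_bound[OF \<Theta>] by blast
  have shifted: "is_solution f (\<lambda>t. u (t + T))"
    by (rule is_solution_shift[OF u \<open>T \<ge> 0\<close> periodic])
  have "norm (u (t + T) - u t) \<le> B * norm (\<Theta> (u T - u 0)) * exp (lam * t)" if "t \<ge> 0" for t
  proof -
    have "norm (u (t + T) - u t) \<le> B * norm (\<Theta> (u (t + T) - u t))"
      by (rule B)
    also have "\<dots> \<le> B * (exp (lam * t) * norm (\<Theta> (u (0 + T) - u 0)))"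
      using is_solution_dist_le_exp[OF shifted u \<Theta>(1) bij_is_inj[OF \<Theta>(2)] M that] \<open>B \<ge> 0\<close>
      by (intro mult_left_mono) auto
    finally show ?thesis
      by (simp add: mult_ac)
  qed
  then show ?thesis
    by blast
qed

theorem mainTheorem13:
  fixes h :: "'v::banach \<Rightarrow> 'v" and k :: nat
    and f :: "real \<Rightarrow> 'v \<Rightarrow> 'v" and dt :: real
    and \<Theta> :: "'v \<Rightarrow> 'w::banach" and lam :: real
  assumes "C1_diffeo h" and "k \<ge> 1" and "h ^^ k = id"
    and "dt > 0"
    and "\<And>n u t. 1 \<le> n \<Longrightarrow> n \<le> k \<Longrightarrow> t \<ge> 0 \<Longrightarrow>
           f t ((h ^^ n) u) = frechet_derivative (h ^^ n) (at u) (f (t + real n * dt) u)"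
    and "GL \<Theta>" and "lam < 0"
    and "\<And>t. t \<ge> 0 \<Longrightarrow> M_Theta \<Theta> (f t) \<le> ereal lam"
  shows "\<forall>u. is_solution f u \<longrightarrow>
           (\<exists>p. (\<forall>t\<ge>0. (\<lambda>n. u (t + real n * real k * dt)) \<longlonglongrightarrow> p t)
              \<and> (\<forall>t\<ge>0. p (t + real k * dt) = p t)
              \<and> (\<exists>C \<alpha>. \<alpha> > 0 \<and> (\<forall>t\<ge>0. norm (u t - p t) \<le> C * exp (- \<alpha> * t))))"
proof (intro allI impI)
  fix u
  assume u: "is_solution f u"
  define T where "T = real k * dt"
  have "T > 0"
    using assms(2,4) by (simp add: T_def)
  have periodic: "f (t + T) x = f t x" if "t \<ge> 0" for t x
    using assms(5)[of k t x] assms(2,3) that by (simp add: T_def)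
  obtain C where "\<And>t. t \<ge> 0 \<Longrightarrow> norm (u (t + T) - u t) \<le> C * exp (lam * t)"
    using is_solution_periodic_increments_le_exp[OF u _ periodic assms(6,8)] \<open>T > 0\<close> by auto
  then obtain p where conv: "\<forall>t\<ge>0. (\<lambda>n. u (t + real n * T)) \<longlonglongrightarrow> p t"
      and per: "\<forall>t\<ge>0. p (t + T) = p t"
      and bound: "\<forall>t\<ge>0. norm (u t - p t) \<le> C / (1 - exp (lam * T)) * exp (lam * t)"
    using asymptotically_periodic_of_exp_decaying_increments[OF \<open>T > 0\<close> \<open>lam < 0\<close>] by blast
  have "\<exists>C \<alpha>. \<alpha> > 0 \<and> (\<forall>t\<ge>0. norm (u t - p t) \<le> C * exp (- \<alpha> * t))"
    using bound \<open>lam < 0\<close> by (intro exI[of _ "C / (1 - exp (lam * T))"] exI[of _ "- lam"]) simp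
  then show "\<exists>p. (\<forall>t\<ge>0. (\<lambda>n. u (t + real n * real k * dt)) \<longlonglongrightarrow> p t)
      \<and> (\<forall>t\<ge>0. p (t + real k * dt) = p t)
      \<and> (\<exists>C \<alpha>. \<alpha> > 0 \<and> (\<forall>t\<ge>0. norm (u t - p t) \<le> C * exp (- \<alpha> * t)))"
    using conv per by (intro exI[of _ p]) (auto simp: T_def mult.assoc)
qed

end
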